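(* For $n\geq 1$, let $E_n(p,q)=\sum_{\sigma\in\mathcal{Q}_n}p^{\operatorname{odd}(\sigma)}q^{\operatorname{even}(\sigma)}$. Then \[ E_n(p,q)=\sum_{k=0}^n {n\brack k}\,p^k(p+q)^{n-k}. \] In particular, for $n\geq 2$: $E_n(1,1)=(2n-1)!!$, $E_n(p,0)=n!\,p^n$, $E_n(1,-1)=1$ and $E_n(-1,1)=(-1)^n$.
   Context: Let $[n]_2$ be the multiset $\{1,1,2,2,\dots,n,n\}$. A Stirling permutation of order $n$ is a permutation $\sigma=\sigma_1\cdots\sigma_{2n}$ of $[n]_2$ such that for each $i\in[n]$ every entry between the two occurrences of $i$ is greater than $i$; $\mathcal{Q}_n$ is the set of these. A value $k\in[n]$ is an even (resp. odd) indexed entry of $\sigma$ if the first occurrence of $k$ in $\sigma$ is at an even (resp. odd) position; $\operatorname{even}(\sigma)$ and $\operatorname{odd}(\sigma)$ are the numbers of even and odd indexed entries (so $\operatorname{even}(\sigma)+\operatorname{odd}(\sigma)=n$). ${n\brack k}$ denotes the signless Stirling number of the first kind, the number of permutations of $[n]$ with exactly $k$ cycles. *)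

theory Defs
  imports Main "HOL-Library.Multiset" "HOL-Combinatorics.Stirling"
begin

text \<open>Stirling permutations of order n, as lists of length 2n (positions are 0-based
  list indices; 1-based position = index + 1).\<close>

definition stirling_perms :: "nat \<Rightarrow> nat list set" where
  "stirling_perms n = {s. mset s = mset (concat (map (\<lambda>i. [i, i]) [1..<n+1])) \<and>
     (\<forall>a b c. a < c \<and> c < b \<and> b < length s \<and> s ! a = s ! b \<longrightarrow> s ! c > s ! a)}"

definition first_pos :: "nat list \<Rightarrow> nat \<Rightarrow> nat" where
  "first_pos s k = (LEAST j. j < length s \<and> s ! j = k) + 1"

definition odd_entries :: "nat list \<Rightarrow> nat" where
  "odd_entries s = card {k \<in> set s. odd (first_pos s k)}"

definition even_entries :: "nat list \<Rightarrow> nat" where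
  "even_entries s = card {k \<in> set s. even (first_pos s k)}"

definition E_poly :: "nat \<Rightarrow> 'a::comm_ring_1 \<Rightarrow> 'a \<Rightarrow> 'a" where
  "E_poly n p q = (\<Sum>\<sigma>\<in>stirling_perms n. p ^ odd_entries \<sigma> * q ^ even_entries \<sigma>)"

text \<open>Double factorial of an odd number: (2n-1)!! = 1 * 3 * ... * (2n-1).\<close>
definition odd_double_fact :: "nat \<Rightarrow> nat" where
  "odd_double_fact n = (\<Prod>i<n. 2 * i + 1)"

end

theory Submission
  imports Defs
begin

text \<open>Every Stirling permutation of order n+1 arises in exactly one way from one of order n by
  inserting the adjacent pair (n+1)(n+1) into one of its 2n+1 gaps. Inserting into the gap after
  i entries makes n+1 an entry first occurring at position i+1, which is odd for the n+1 even
  values of i and even for the n odd ones, while every old first occurrence moves by 0 or 2 and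
  keeps its parity. Hence E_{n+1} = E_n ((n+1)p + nq), so E_n is the product of the factors
  p + j(p+q) for j < n, and the homogeneous form of the rising-factorial expansion by Stirling
  numbers of the first kind turns this product into the stated sum.\<close>

lemma sum_stirling_homogeneous:
  "(\<Sum>k\<le>n. of_nat (stirling n k) * x ^ k * y ^ (n - k)) =
     (\<Prod>j<n. x + of_nat j * y :: 'a::comm_semiring_1)"
proof (induct n)
  case 0
  then show ?case by simp
next
  case (Suc n)
  let ?S = "\<Sum>k\<le>n. of_nat (stirling n k) * x ^ k * y ^ (n - k)"
  have n0: "of_nat (n * stirling n 0) = (0 :: 'a)" by (cases n) simp_all
  have "(\<Sum>i\<le>n. of_nat (n * stirling n (Suc i)) * x ^ Suc i * y ^ (n - i)) =
      (\<Sum>k\<le>Suc n. of_nat (n * stirling n k) * x ^ k * y ^ (Suc n - k))"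
    using n0 by (subst sum.atMost_Suc_shift) simp
  also have "\<dots> = of_nat n * y * ?S"
    by (simp add: sum_distrib_left Suc_diff_le algebra_simps)
  finally have "(\<Sum>i\<le>n. of_nat (n * stirling n (Suc i)) * x ^ Suc i * y ^ (n - i)) = of_nat n * y * ?S" .
  moreover have "(\<Sum>k\<le>Suc n. of_nat (stirling (Suc n) k) * x ^ k * y ^ (Suc n - k)) =
      (\<Sum>i\<le>n. of_nat (n * stirling n (Suc i)) * x ^ Suc i * y ^ (n - i)) + x * ?S"
    by (subst sum.atMost_Suc_shift) (simp add: sum.distrib ring_distribs sum_distrib_left algebra_simps)
  ultimately show ?case
    using Suc by (simp add: algebra_simps)
qed

definition insert_twin :: "nat \<Rightarrow> 'a \<Rightarrow> 'a list \<Rightarrow> 'a list" where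
  "insert_twin i m s = take i s @ m # m # drop i s"

definition shift_past :: "nat \<Rightarrow> nat \<Rightarrow> nat" where
  "shift_past i j = (if j < i then j else j + 2)"

lemma shift_past_less_iff [simp]: "shift_past i a < shift_past i b \<longleftrightarrow> a < b"
  by (simp add: shift_past_def)

lemma even_shift_past [simp]: "even (shift_past i j) = even j"
  by (simp add: shift_past_def)

lemma shift_past_less_add_2 [simp]: "j < n \<Longrightarrow> shift_past i j < Suc (Suc n)"
  by (simp add: shift_past_def)

lemma length_insert_twin [simp]: "i \<le> length s \<Longrightarrow> length (insert_twin i m s) = length s + 2"
  by (simp add: insert_twin_def)

lemma set_insert_twin [simp]: "set (insert_twin i m s) = insert m (set s)"
proof -
  have "set s = set (take i s) \<union> set (drop i s)" by (metis append_take_drop_id set_append)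
  then show ?thesis by (auto simp: insert_twin_def)
qed

lemma mset_insert_twin [simp]: "mset (insert_twin i m s) = mset s + {#m, m#}"
proof -
  have "mset s = mset (take i s) + mset (drop i s)" by (metis append_take_drop_id mset_append)
  then show ?thesis by (simp add: insert_twin_def)
qed

lemma nth_insert_twin_shift_past [simp]:
  "i \<le> length s \<Longrightarrow> j < length s \<Longrightarrow> insert_twin i m s ! shift_past i j = s ! j"
  by (auto simp: insert_twin_def shift_past_def nth_append min_def)

lemma nth_insert_twin_new [simp]:
  "i \<le> length s \<Longrightarrow> insert_twin i m s ! i = m" "i \<le> length s \<Longrightarrow> insert_twin i m s ! Suc i = m"
  by (simp_all add: insert_twin_def nth_append)

lemma index_insert_twin_cases [consumes 2]:
  assumes "i \<le> length s" "k < length s + 2"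
  obtains "k = i" | "k = Suc i" | j where "j < length s" "k = shift_past i j"
proof -
  consider "k < i" | "k = i" | "k = Suc i" | "k \<ge> i + 2" by linarith
  then show thesis
  proof cases
    case 1 then show ?thesis using that(3)[of k] assms by (simp add: shift_past_def)
  next
    case 4
    then have "k - 2 < length s" "k = shift_past i (k - 2)" using assms by (auto simp: shift_past_def)
    then show ?thesis using that(3) by blast
  qed (use that in auto)
qed

definition stirling_pattern :: "'a::order list \<Rightarrow> bool" where
  "stirling_pattern s \<longleftrightarrow>
     (\<forall>a b c. a < c \<and> c < b \<and> b < length s \<and> s ! a = s ! b \<longrightarrow> s ! c > s ! a)"

lemma stirling_patternD:
  "stirling_pattern s \<Longrightarrow> a < c \<Longrightarrow> c < b \<Longrightarrow> b < length s \<Longrightarrow> s ! a = s ! b \<Longrightarrow> s ! c > s ! a"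
  unfolding stirling_pattern_def by blast

lemma stirling_pattern_insert_twin:
  assumes s: "stirling_pattern s" and max: "\<forall>x\<in>set s. x < m" and i: "i \<le> length s"
  shows "stirling_pattern (insert_twin i m s)"
  unfolding stirling_pattern_def
proof (intro allI impI, elim conjE)
  let ?t = "insert_twin i m s"
  have small: "j < length s \<Longrightarrow> s ! j < m" for j using max by simp
  fix a b c assume "a < c" "c < b" "b < length ?t" and eq: "?t ! a = ?t ! b"
  then have a: "a < length s + 2" and b: "b < length s + 2" and c: "c < length s + 2"
    using i by simp_all
  show "?t ! c > ?t ! a"
    using \<open>a < c\<close> \<open>c < b\<close> eq i
    by (cases rule: index_insert_twin_cases[OF i a]; cases rule: index_insert_twin_cases[OF i b];
        cases rule: index_insert_twin_cases[OF i c])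
      (auto dest: small stirling_patternD[OF s] less_trans[of _ _ "length s"])
qed

lemma stirling_pattern_insert_twinD:
  assumes t: "stirling_pattern (insert_twin i m s)" and i: "i \<le> length s"
  shows "stirling_pattern s"
  unfolding stirling_pattern_def
proof (intro allI impI, elim conjE)
  fix a b c assume "a < c" "c < b" "b < length s" "s ! a = s ! b"
  then show "s ! c > s ! a"
    using stirling_patternD[OF t, of "shift_past i a" "shift_past i c" "shift_past i b"] i
    by simp
qed

lemma first_pos_eqI:
  "j < length s \<Longrightarrow> s ! j = k \<Longrightarrow> (\<forall>j'<j. s ! j' \<noteq> k) \<Longrightarrow> first_pos s k = Suc j"
  unfolding first_pos_def by (subst Least_equality[of _ j]) (auto simp flip: not_less)

lemma first_posE:
  assumes "k \<in> set s"
  obtains j where "first_pos s k = Suc j" "j < length s" "s ! j = k" "\<forall>j'<j. s ! j' \<noteq> k"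
proof -
  define j where "j = (LEAST j. j < length s \<and> s ! j = k)"
  have "j < length s \<and> s ! j = k"
    unfolding j_def by (rule LeastI_ex) (use assms in \<open>auto simp: in_set_conv_nth\<close>)
  moreover have "s ! j' \<noteq> k" if "j' < j" for j'
  proof -
    have "\<not> (j' < length s \<and> s ! j' = k)"
      using that unfolding j_def by (rule not_less_Least)
    with that calculation show ?thesis by simp
  qed
  ultimately show thesis
    using that first_pos_eqI by blast
qed

lemma first_pos_insert_twin_new:
  "m \<notin> set s \<Longrightarrow> i \<le> length s \<Longrightarrow> first_pos (insert_twin i m s) m = Suc i"
  by (rule first_pos_eqI) (auto simp: insert_twin_def nth_append dest: in_set_takeD)

lemma first_pos_insert_twin_old:
  assumes k: "k \<in> set s" "k \<noteq> m" and i: "i \<le> length s"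
  shows "first_pos (insert_twin i m s) k = Suc (shift_past i (first_pos s k - 1))"
proof -
  obtain j where j: "first_pos s k = Suc j" "j < length s" "s ! j = k" "\<forall>j'<j. s ! j' \<noteq> k"
    using first_posE[OF k(1)] .
  have "insert_twin i m s ! j' \<noteq> k" if "j' < shift_past i j" for j'
  proof -
    have "j' < length s + 2"
      using that j(2) shift_past_less_add_2[of j "length s" i] by linarith
    with i show ?thesis
    proof (cases rule: index_insert_twin_cases)
      case (3 j'')
      then show ?thesis using that j(2,4) i by simp
    qed (use i k(2) in simp_all)
  qed
  then show ?thesis
    using j i by (intro first_pos_eqI) auto
qed

lemma even_first_pos_insert_twin_old:
  assumes "k \<in> set s" "k \<noteq> m" "i \<le> length s"
  shows "even (first_pos (insert_twin i m s) k) \<longleftrightarrow> even (first_pos s k)"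
proof -
  obtain j where "first_pos s k = Suc j"
    using first_posE[OF assms(1)] by blast
  then show ?thesis
    using assms by (simp add: first_pos_insert_twin_old)
qed

lemma insert_twin_inject:
  assumes "m \<notin> set s" "m \<notin> set s'" "i \<le> length s" "i' \<le> length s'"
    and eq: "insert_twin i m s = insert_twin i' m s'"
  shows "i = i' \<and> s = s'"
proof -
  have "takeWhile (\<lambda>x. x \<noteq> m) (insert_twin j m r) = take j r" if "m \<notin> set r" for j r
    using that by (auto simp: insert_twin_def takeWhile_append dest: in_set_takeD)
  then have "take i s = take i' s'"
    using assms by metis
  then have "i = i'"
    using assms(3,4) by (metis length_take min.absorb2)
  moreover have "s = take i (insert_twin i m s) @ drop (Suc (Suc i)) (insert_twin i m s)"
    "s' = take i' (insert_twin i' m s') @ drop (Suc (Suc i')) (insert_twin i' m s')"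
    using assms(3,4) by (simp_all add: insert_twin_def)
  ultimately show ?thesis using eq by simp
qed

lemma odd_entries_insert_twin:
  assumes "m \<notin> set s" "i \<le> length s"
  shows "odd_entries (insert_twin i m s) = odd_entries s + (if even i then 1 else 0)"
proof -
  have [simp]: "k \<noteq> m" if "k \<in> set s" for k using assms(1) that by blast
  have "{k \<in> set (insert_twin i m s). odd (first_pos (insert_twin i m s) k)} =
      (if even i then insert m else id) {k \<in> set s. odd (first_pos s k)}"
    using assms by (auto simp: first_pos_insert_twin_new even_first_pos_insert_twin_old)
  then show ?thesis
    using assms(1) by (simp add: odd_entries_def)
qed

lemma even_entries_insert_twin:
  assumes "m \<notin> set s" "i \<le> length s"
  shows "even_entries (insert_twin i m s) = even_entries s + (if even i then 0 else 1)"
proof -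
  have [simp]: "k \<noteq> m" if "k \<in> set s" for k using assms(1) that by blast
  have "{k \<in> set (insert_twin i m s). even (first_pos (insert_twin i m s) k)} =
      (if even i then id else insert m) {k \<in> set s. even (first_pos s k)}"
    using assms by (auto simp: first_pos_insert_twin_new even_first_pos_insert_twin_old)
  then show ?thesis
    using assms(1) by (simp add: even_entries_def)
qed

lemma stirling_pattern_insert_twinE:
  assumes t: "stirling_pattern t" and two: "count (mset t) m = 2" and max: "\<forall>x\<in>set t. x \<le> m"
  obtains i s where "i \<le> length s" "m \<notin> set s" "t = insert_twin i m s"
proof -
  obtain xs ys zs where split: "t = xs @ m # ys @ m # zs"
    and "m \<notin> set xs" "m \<notin> set ys" "m \<notin> set zs"
  proof -
    have "m \<in> set t" using two by (metis count_eq_zero_iff set_mset_mset zero_neq_numeral)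
    then obtain xs us where t1: "t = xs @ m # us" and xs: "m \<notin> set xs" by (metis split_list_first)
    moreover have "count (mset xs) m = 0" using xs by (simp add: count_eq_zero_iff)
    ultimately have "count (mset us) m = 1" using two by (simp only: mset_append count_union) simp
    then obtain ys zs where "us = ys @ m # zs" and "m \<notin> set ys"
      by (metis count_eq_zero_iff one_neq_zero set_mset_mset split_list_first)
    with t1 xs \<open>count (mset us) m = 1\<close> show thesis
      using that by (simp add: count_eq_zero_iff)
  qed
  have "ys = []"
  proof (rule ccontr)
    assume "ys \<noteq> []"
    then have "t ! Suc (length xs) > t ! length xs"
      using split by (intro stirling_patternD[OF t, of _ _ "Suc (length xs + length ys)"])
        (simp_all add: nth_append)
    moreover have "t ! Suc (length xs) \<in> set t"
      using split by (intro nth_mem) simp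
    moreover have "t ! length xs = m"
      using split by simp
    ultimately show False
      using max leD by blast
  qed
  then show thesis
    using that[of "length xs" "xs @ zs"] split \<open>m \<notin> set xs\<close> \<open>m \<notin> set zs\<close>
    by (simp add: insert_twin_def)
qed

abbreviation doubled_range :: "nat \<Rightarrow> nat multiset" where
  "doubled_range n \<equiv> mset (concat (map (\<lambda>i. [i, i]) [1..<n+1]))"

lemma stirling_perms_iff:
  "s \<in> stirling_perms n \<longleftrightarrow> mset s = doubled_range n \<and> stirling_pattern s"
  by (simp add: stirling_perms_def stirling_pattern_def)

lemma set_stirling_perm: "s \<in> stirling_perms n \<Longrightarrow> set s = {1..n}"
proof -
  assume "s \<in> stirling_perms n"
  then have "set s = set_mset (doubled_range n)"
    by (metis stirling_perms_iff set_mset_mset)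
  then show ?thesis by auto
qed

lemma length_stirling_perm: "s \<in> stirling_perms n \<Longrightarrow> length s = 2 * n"
proof -
  assume "s \<in> stirling_perms n"
  then have "length s = size (doubled_range n)"
    by (metis stirling_perms_iff size_mset)
  also have "\<dots> = 2 * n"
    by (induct n) auto
  finally show ?thesis .
qed

lemma stirling_perms_0: "stirling_perms 0 = {[]}"
  by (auto simp: stirling_perms_iff stirling_pattern_def)

lemma stirling_perms_Suc:
  "stirling_perms (Suc n) = (\<lambda>(s, i). insert_twin i (Suc n) s) ` (stirling_perms n \<times> {..2 * n})"
proof (intro equalityI subsetI)
  fix t assume t: "t \<in> stirling_perms (Suc n)"
  then have mset_t: "mset t = doubled_range n + {#Suc n, Suc n#}" and pat: "stirling_pattern t"
    by (simp_all add: stirling_perms_iff)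
  have "count (doubled_range n) (Suc n) = 0"
    by (simp add: count_eq_zero_iff)
  then have "count (mset t) (Suc n) = 2"
    using mset_t by simp
  moreover have "\<forall>x\<in>set t. x \<le> Suc n"
    using set_stirling_perm[OF t] by simp
  ultimately obtain i s where i: "i \<le> length s" and "Suc n \<notin> set s"
    and t_eq: "t = insert_twin i (Suc n) s"
    using stirling_pattern_insert_twinE[OF pat] by blast
  have "s \<in> stirling_perms n"
    using mset_t pat stirling_pattern_insert_twinD[OF _ i] by (simp add: stirling_perms_iff t_eq)
  with i t_eq show "t \<in> (\<lambda>(s, i). insert_twin i (Suc n) s) ` (stirling_perms n \<times> {..2 * n})"
    by (force simp: length_stirling_perm)
next
  fix t assume "t \<in> (\<lambda>(s, i). insert_twin i (Suc n) s) ` (stirling_perms n \<times> {..2 * n})"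
  then obtain s i where s: "s \<in> stirling_perms n" and i: "i \<le> length s"
    and t_eq: "t = insert_twin i (Suc n) s"
    by (auto simp: length_stirling_perm)
  have "\<forall>x\<in>set s. x < Suc n"
    using set_stirling_perm[OF s] by auto
  with s i show "t \<in> stirling_perms (Suc n)"
    by (simp add: stirling_perms_iff t_eq stirling_pattern_insert_twin)
qed

lemma inj_on_insert_twin_stirling_perms:
  "inj_on (\<lambda>(s, i). insert_twin i (Suc n) s) (stirling_perms n \<times> {..2 * n})"
  by (intro inj_onI)
    (auto simp: length_stirling_perm set_stirling_perm dest: insert_twin_inject[rotated 4])

lemma sum_atMost_double_if_even:
  "(\<Sum>i\<le>2 * n. if even i then p else q) = of_nat (Suc n) * p + of_nat n * (q :: 'a::comm_semiring_1)"
  by (induct n) (simp_all add: algebra_simps)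

lemma E_poly_Suc:
  "E_poly (Suc n) p q = E_poly n p q * (of_nat (Suc n) * p + of_nat n * q)"
proof -
  define w where "w \<sigma> = p ^ odd_entries \<sigma> * q ^ even_entries \<sigma>" for \<sigma>
  have w_insert: "w (insert_twin i (Suc n) s) = w s * (if even i then p else q)"
    if "s \<in> stirling_perms n" "i \<le> 2 * n" for s i
    using that set_stirling_perm[OF that(1)] length_stirling_perm[OF that(1)]
    by (simp add: w_def odd_entries_insert_twin even_entries_insert_twin algebra_simps)
  have "E_poly (Suc n) p q = (\<Sum>(s, i)\<in>stirling_perms n \<times> {..2 * n}. w (insert_twin i (Suc n) s))"
    unfolding E_poly_def stirling_perms_Suc sum.reindex[OF inj_on_insert_twin_stirling_perms]
    by (simp add: w_def case_prod_beta comp_def)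
  also have "\<dots> = (\<Sum>s\<in>stirling_perms n. w s * (\<Sum>i\<le>2 * n. if even i then p else q))"
    by (simp add: sum.cartesian_product[symmetric] w_insert sum_distrib_left)
  also have "\<dots> = E_poly n p q * (of_nat (Suc n) * p + of_nat n * q)"
    by (simp add: E_poly_def w_def sum_atMost_double_if_even sum_distrib_right)
  finally show ?thesis .
qed

lemma E_poly_eq_prod: "E_poly n p q = (\<Prod>j<n. p + of_nat j * (p + q))"
proof (induct n)
  case 0
  then show ?case by (simp add: E_poly_def stirling_perms_0 odd_entries_def even_entries_def)
next
  case (Suc n)
  then show ?case by (simp add: E_poly_Suc algebra_simps)
qed

theorem theorem4:
  fixes n :: nat and p q :: "'a::comm_ring_1"
  assumes "n \<ge> 1"
  shows "E_poly n p q = (\<Sum>k\<le>n. of_nat (stirling n k) * p ^ k * (p + q) ^ (n - k))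
    \<and> (n \<ge> 2 \<longrightarrow>
         E_poly n (1::int) 1 = int (odd_double_fact n)
       \<and> E_poly n p 0 = of_nat (fact n) * p ^ n
       \<and> E_poly n (1::int) (-1) = 1
       \<and> E_poly n (-1::int) 1 = (-1) ^ n)"
  \<comment> \<open>The formulas hold for every n.\<close>
proof (intro conjI impI)
  show "E_poly n p q = (\<Sum>k\<le>n. of_nat (stirling n k) * p ^ k * (p + q) ^ (n - k))"
    by (simp add: E_poly_eq_prod sum_stirling_homogeneous)
  show "E_poly n (1::int) 1 = int (odd_double_fact n)"
    by (simp add: E_poly_eq_prod odd_double_fact_def algebra_simps)
  show "E_poly n p 0 = of_nat (fact n) * p ^ n"
    by (induct n) (simp_all add: E_poly_eq_prod algebra_simps)
  show "E_poly n (1::int) (-1) = 1"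
    by (simp add: E_poly_eq_prod)
  show "E_poly n (-1::int) 1 = (-1) ^ n"
    by (simp add: E_poly_eq_prod)
qed

end
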